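(* For an arbitrary sequence of instances $\{\mathcal{I}_N\}$ of the binary voting game, let $\Sigma_N$ be a sincere strategy profile in $\mathcal{I}_N$. Then $\lim_{N\to\infty}A(\Sigma_N)=1$ if and only if there is a sequence $\varepsilon_N\to0$ such that for every $N$, $\Sigma_N$ is an $\varepsilon_N$-strong Bayes Nash Equilibrium.
   Context: Binary voting game. An instance has $N$ agents each voting for $\mathbf{A}$ or $\mathbf{R}$. Unobserved world state $W\in\{L,H\}$ with common prior $P_L,P_H>0$. Conditional on $W$, each agent independently receives a signal $S_n\in\{l,h\}$ with $P_{sw}=\Pr[S_n=s\mid W=w]$, $P_{hH}>P_{hL}$, $P_{lH}<P_{lL}$. With threshold $\mu\in(0,1)$, $\mathbf{A}$ wins iff at least $\mu N$ agents vote $\mathbf{A}$, else $\mathbf{R}$ wins. Agent $n$ has utility $v_n:\{L,H\}\times\{\mathbf{A},\mathbf{R}\}\to\{0,\dots,B\}$ ($B$ fixed) with $v_n(H,\mathbf{A})>v_n(L,\mathbf{A})$, $v_n(H,\mathbf{R})<v_n(L,\mathbf{R})$. Every agent is friendly ($v_n(H,\mathbf{A})>v_n(L,\mathbf{A})>v_n(L,\mathbf{R})>v_n(H,\mathbf{R})$), unfriendly ($v_n(L,\mathbf{R})>v_n(H,\mathbf{R})>v_n(H,\mathbf{A})>v_n(L,\mathbf{A})$) or contingent ($v_n(H,\mathbf{A})>v_n(H,\mathbf{R})$, $v_n(L,\mathbf{R})>v_n(L,\mathbf{A})$), with counts $\lfloor\alpha_FN\rfloor$, $\lfloor\alpha_UN\rfloor$,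 rest, for fixed $\alpha$'s summing to 1 with $\alpha_F<\mu$, $\alpha_U<1-\mu$ (informed majority decision: $\mathbf{A}$ in $H$, $\mathbf{R}$ in $L$). A sequence of instances: $\mathcal{I}_N$ has $N$ agents, all share $\mu$, prior, signal distribution, $\alpha$'s; utilities arbitrary. A strategy gives, for each signal, a probability of voting $\mathbf{A}$. Sincere profile: for each agent $n$ and signal $s$, with $u_n(\mathbf{X}\mid s)=\Pr[W=L\mid S_n=s]v_n(L,\mathbf{X})+\Pr[W=H\mid S_n=s]v_n(H,\mathbf{X})$ (posterior by Bayes' rule), agent $n$ on signal $s$ votes $\mathbf{A}$ if $u_n(\mathbf{A}\mid s)>u_n(\mathbf{R}\mid s)$ and $\mathbf{R}$ otherwise. $\lambda^{\mathbf{X}}_w(\Sigma)$: ex-ante probability that $\mathbf{X}$ wins in state $w$. Fidelity $A(\Sigma)=P_L\lambda^{\mathbf{R}}_L(\Sigma)+P_H\lambda^{\mathbf{A}}_H(\Sigma)$. Expected utility $u_n(\Sigma)=\sum_wP_w(\lambda^{\mathbf{A}}_w(\Sigma)v_n(w,\mathbf{A})+\lambda^{\mathbf{R}}_w(\Sigma)v_n(w,\mathbf{R}))$. $\Sigma$ is an $\varepsilon$-strong Bayes Nash Equilibrium if there is no set $D$ of agents and profile $\Sigma'$ with $\sigma'_n=\sigma_n$ for $n\notin D$, $u_n(\Sigma')\ge u_n(\Sigma)$ for all $n\in D$ and $u_n(\Sigma')>u_n(\Sigma)+\varepsilon$ for some $n\in D$. *)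

theory Defs
  imports Complex_Main
begin

datatype world = WL | WH
datatype signal = Sl | Sh
datatype outcome = Acc | Rej

definition friendly :: "(world \<Rightarrow> outcome \<Rightarrow> nat) \<Rightarrow> bool" where
  "friendly v \<longleftrightarrow> v WH Acc > v WL Acc \<and> v WL Acc > v WL Rej \<and> v WL Rej > v WH Rej"

definition unfriendly :: "(world \<Rightarrow> outcome \<Rightarrow> nat) \<Rightarrow> bool" where
  "unfriendly v \<longleftrightarrow> v WL Rej > v WH Rej \<and> v WH Rej > v WH Acc \<and> v WH Acc > v WL Acc"

definition contingent :: "(world \<Rightarrow> outcome \<Rightarrow> nat) \<Rightarrow> bool" where
  "contingent v \<longleftrightarrow> v WH Acc > v WH Rej \<and> v WL Rej > v WL Acc"

text \<open>Posterior Pr[W = w | S_n = s] by Bayes' rule; P is the prior, Psig s w = Pr[S = s | W = w].\<close>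
definition posterior :: "(world \<Rightarrow> real) \<Rightarrow> (signal \<Rightarrow> world \<Rightarrow> real) \<Rightarrow> signal \<Rightarrow> world \<Rightarrow> real" where
  "posterior P Psig s w = P w * Psig s w / (P WL * Psig s WL + P WH * Psig s WH)"

definition interim_util :: "(world \<Rightarrow> real) \<Rightarrow> (signal \<Rightarrow> world \<Rightarrow> real) \<Rightarrow>
    (world \<Rightarrow> outcome \<Rightarrow> nat) \<Rightarrow> signal \<Rightarrow> outcome \<Rightarrow> real" where
  "interim_util P Psig v s X =
     posterior P Psig s WL * real (v WL X) + posterior P Psig s WH * real (v WH X)"

text \<open>A profile Sig gives, for agent n and signal s, the probability Sig n s of voting A.
  Agents of the instance with N agents are 0..N-1.\<close>
definition valid_profile :: "nat \<Rightarrow> (nat \<Rightarrow> signal \<Rightarrow> real) \<Rightarrow> bool" where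
  "valid_profile N Sig \<longleftrightarrow> (\<forall>n<N. \<forall>s. 0 \<le> Sig n s \<and> Sig n s \<le> 1)"

definition sincere :: "(world \<Rightarrow> real) \<Rightarrow> (signal \<Rightarrow> world \<Rightarrow> real) \<Rightarrow> nat \<Rightarrow>
    (nat \<Rightarrow> world \<Rightarrow> outcome \<Rightarrow> nat) \<Rightarrow> (nat \<Rightarrow> signal \<Rightarrow> real) \<Rightarrow> bool" where
  "sincere P Psig N v Sig \<longleftrightarrow>
     (\<forall>n<N. \<forall>s. Sig n s =
        (if interim_util P Psig (v n) s Acc > interim_util P Psig (v n) s Rej then 1 else 0))"

definition vote_prob :: "(signal \<Rightarrow> world \<Rightarrow> real) \<Rightarrow> (nat \<Rightarrow> signal \<Rightarrow> real) \<Rightarrow> world \<Rightarrow> nat \<Rightarrow> real" where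
  "vote_prob Psig Sig w n = Psig Sl w * Sig n Sl + Psig Sh w * Sig n Sh"

text \<open>lam mu Psig N Sig w X: probability that outcome X wins in state w; agents vote
  independently given w, and A wins iff at least mu*N agents vote A.\<close>
definition lam :: "real \<Rightarrow> (signal \<Rightarrow> world \<Rightarrow> real) \<Rightarrow> nat \<Rightarrow> (nat \<Rightarrow> signal \<Rightarrow> real) \<Rightarrow>
    world \<Rightarrow> outcome \<Rightarrow> real" where
  "lam mu Psig N Sig w X =
     (\<Sum>S \<in> {S. S \<subseteq> {..<N} \<and> ((X = Acc) \<longleftrightarrow> mu * real N \<le> real (card S))}.
        (\<Prod>n\<in>S. vote_prob Psig Sig w n) * (\<Prod>n\<in>{..<N} - S. 1 - vote_prob Psig Sig w n))"

definition fidelity :: "(world \<Rightarrow> real) \<Rightarrow> real \<Rightarrow> (signal \<Rightarrow> world \<Rightarrow> real) \<Rightarrow> nat \<Rightarrow>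
    (nat \<Rightarrow> signal \<Rightarrow> real) \<Rightarrow> real" where
  "fidelity P mu Psig N Sig = P WL * lam mu Psig N Sig WL Rej + P WH * lam mu Psig N Sig WH Acc"

definition exp_util :: "(world \<Rightarrow> real) \<Rightarrow> real \<Rightarrow> (signal \<Rightarrow> world \<Rightarrow> real) \<Rightarrow> nat \<Rightarrow>
    (nat \<Rightarrow> signal \<Rightarrow> real) \<Rightarrow> (world \<Rightarrow> outcome \<Rightarrow> nat) \<Rightarrow> real" where
  "exp_util P mu Psig N Sig v =
     (\<Sum>w\<in>{WL, WH}. P w * (lam mu Psig N Sig w Acc * real (v w Acc)
                           + lam mu Psig N Sig w Rej * real (v w Rej)))"

definition strong_BNE :: "(world \<Rightarrow> real) \<Rightarrow> real \<Rightarrow> (signal \<Rightarrow> world \<Rightarrow> real) \<Rightarrow> nat \<Rightarrow>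
    (nat \<Rightarrow> world \<Rightarrow> outcome \<Rightarrow> nat) \<Rightarrow> (nat \<Rightarrow> signal \<Rightarrow> real) \<Rightarrow> real \<Rightarrow> bool" where
  "strong_BNE P mu Psig N v Sig \<epsilon> \<longleftrightarrow>
     \<not> (\<exists>D Sig'. D \<subseteq> {..<N} \<and> valid_profile N Sig' \<and>
          (\<forall>n<N. n \<notin> D \<longrightarrow> Sig' n = Sig n) \<and>
          (\<forall>n\<in>D. exp_util P mu Psig N Sig' (v n) \<ge> exp_util P mu Psig N Sig (v n)) \<and>
          (\<exists>n\<in>D. exp_util P mu Psig N Sig' (v n) > exp_util P mu Psig N Sig (v n) + \<epsilon>))"

end

theory Submission
  imports Defs
begin

text \<open>
  Write \<open>\<delta> = 1 - A(\<Sigma>)\<close> for the probability that the sincere profile picks the wrong outcome.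
  A deviation changes the expected utility of agent \<open>n\<close> by \<open>x \<alpha>\<^sub>n + y \<beta>\<^sub>n\<close>, where \<open>x\<close> and \<open>y\<close> are
  the (prior-weighted) changes of the acceptance probability in states \<open>L\<close> and \<open>H\<close>, and
  \<open>\<alpha>\<^sub>n, \<beta>\<^sub>n\<close> are the premiums of acceptance over rejection; moreover \<open>x \<ge> -\<delta>\<close> and \<open>y \<le> \<delta>\<close>.
  If a coalition contains a contingent agent, or a friendly and an unfriendly one, the
  signs of their premiums force \<open>|x|, |y| = O(B \<delta>)\<close>, so nobody gains more than \<open>O(B\<^sup>2 \<delta>)\<close>;
  a purely friendly (unfriendly) coalition can only lower (raise) acceptance, which hurts it.
  Hence sincere voting is a \<open>2B(B+1)\<delta>\<close>-strong equilibrium.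

  Conversely, the contingent agents, which are a positive fraction of the population, can
  mix so that the expected share of \<open>A\<close>-votes is \<open>\<mu> + \<kappa>\<close> in state \<open>H\<close> and \<open>\<mu> - \<kappa>\<close> in
  state \<open>L\<close>. By Chebyshev's inequality this deviation errs with probability \<open>O(1/N)\<close>, and it
  gains every contingent agent at least \<open>\<delta> - O(B/N)\<close>. An \<open>\<epsilon>\<close>-strong equilibrium therefore
  has \<open>\<delta> \<le> |\<epsilon>| + O(B/N)\<close>.
\<close>

section \<open>Independent Bernoulli trials\<close>

definition bernoulli_set_prob :: "('a \<Rightarrow> real) \<Rightarrow> 'a set \<Rightarrow> 'a set \<Rightarrow> real" where
  "bernoulli_set_prob p I S = (\<Prod>i\<in>S. p i) * (\<Prod>i\<in>I - S. 1 - p i)"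

lemma bernoulli_set_prob_nonneg:
  assumes "\<And>i. i \<in> I \<Longrightarrow> 0 \<le> p i \<and> p i \<le> 1" and "S \<subseteq> I"
  shows "0 \<le> bernoulli_set_prob p I S"
  unfolding bernoulli_set_prob_def using assms by (intro mult_nonneg_nonneg prod_nonneg) auto

lemma sum_bernoulli_set_prob_insert:
  assumes "finite I" and "i \<notin> I"
  shows "(\<Sum>S\<in>Pow (insert i I). bernoulli_set_prob p (insert i I) S * g S)
       = (\<Sum>S\<in>Pow I. bernoulli_set_prob p I S * ((1 - p i) * g S + p i * g (insert i S)))"
proof -
  let ?W = "bernoulli_set_prob p"
  have without_i: "?W (insert i I) S = (1 - p i) * ?W I S" if "S \<in> Pow I" for S
  proof -
    have "insert i I - S = insert i (I - S)" "i \<notin> I - S" using that assms by auto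
    then show ?thesis unfolding bernoulli_set_prob_def using assms by (simp add: prod.insert)
  qed
  have with_i: "?W (insert i I) (insert i S) = p i * ?W I S" if "S \<in> Pow I" for S
  proof -
    have "insert i I - insert i S = I - S" "i \<notin> S" "finite S"
      using that assms finite_subset by auto
    then show ?thesis unfolding bernoulli_set_prob_def by simp
  qed
  have "inj_on (insert i) (Pow I)"
    using assms unfolding inj_on_def by (metis PowD Diff_insert_absorb subsetD)
  moreover have "Pow I \<inter> insert i ` Pow I = {}" using assms by auto
  ultimately have "(\<Sum>S\<in>Pow (insert i I). ?W (insert i I) S * g S)
      = (\<Sum>S\<in>Pow I. ?W (insert i I) S * g S) + (\<Sum>S\<in>Pow I. ?W (insert i I) (insert i S) * g (insert i S))"
    unfolding Pow_insert using assms by (simp add: sum.union_disjoint sum.reindex)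
  also have "\<dots> = (\<Sum>S\<in>Pow I. ?W I S * ((1 - p i) * g S + p i * g (insert i S)))"
    unfolding sum.distrib[symmetric] by (intro sum.cong) (simp_all add: without_i with_i algebra_simps)
  finally show ?thesis .
qed

lemma card_insert_Pow:
  assumes "finite I" "i \<notin> I" "S \<in> Pow I"
  shows "card (insert i S) = card S + 1"
  using assms by (auto intro: card_insert_disjoint dest: finite_subset)

lemma sum_bernoulli_set_prob:
  "finite I \<Longrightarrow> (\<Sum>S\<in>Pow I. bernoulli_set_prob p I S) = 1"
proof (induction I rule: finite_induct)
  case empty
  then show ?case by (simp add: bernoulli_set_prob_def)
next
  case (insert i I)
  then show ?case
    using sum_bernoulli_set_prob_insert[OF insert.hyps(1,2), of p "\<lambda>_. 1"] by simp
qed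

lemma sum_bernoulli_set_prob_card:
  "finite I \<Longrightarrow> (\<Sum>S\<in>Pow I. bernoulli_set_prob p I S * card S) = (\<Sum>i\<in>I. p i)"
proof (induction I rule: finite_induct)
  case empty
  then show ?case by (simp add: bernoulli_set_prob_def)
next
  case (insert i I)
  have "(\<Sum>S\<in>Pow (insert i I). bernoulli_set_prob p (insert i I) S * card S)
      = (\<Sum>S\<in>Pow I. bernoulli_set_prob p I S * ((1 - p i) * card S + p i * card (insert i S)))"
    by (rule sum_bernoulli_set_prob_insert[OF insert.hyps])
  also have "\<dots> = (\<Sum>S\<in>Pow I. bernoulli_set_prob p I S * card S + p i * bernoulli_set_prob p I S)"
    using insert.hyps by (intro sum.cong) (simp_all add: card_insert_Pow algebra_simps)
  finally show ?case
    using insert sum_bernoulli_set_prob[of I p] by (simp add: sum.distrib sum_distrib_left[symmetric])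
qed

lemma sum_bernoulli_set_prob_card_squared:
  "finite I \<Longrightarrow> (\<Sum>S\<in>Pow I. bernoulli_set_prob p I S * (real (card S))\<^sup>2)
     = (\<Sum>i\<in>I. p i)\<^sup>2 + (\<Sum>i\<in>I. p i * (1 - p i))"
proof (induction I rule: finite_induct)
  case empty
  then show ?case by (simp add: bernoulli_set_prob_def)
next
  case (insert i I)
  have "(\<Sum>S\<in>Pow (insert i I). bernoulli_set_prob p (insert i I) S * (real (card S))\<^sup>2)
      = (\<Sum>S\<in>Pow I. bernoulli_set_prob p I S * ((1 - p i) * (real (card S))\<^sup>2 + p i * (real (card (insert i S)))\<^sup>2))"
    by (rule sum_bernoulli_set_prob_insert[OF insert.hyps])
  also have "\<dots> = (\<Sum>S\<in>Pow I. bernoulli_set_prob p I S * (real (card S))\<^sup>2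
           + 2 * p i * (bernoulli_set_prob p I S * card S) + p i * bernoulli_set_prob p I S)"
    using insert.hyps
    by (intro sum.cong) (simp_all add: card_insert_Pow algebra_simps power2_eq_square)
  also have "\<dots> = (\<Sum>S\<in>Pow I. bernoulli_set_prob p I S * (real (card S))\<^sup>2)
      + 2 * p i * (\<Sum>S\<in>Pow I. bernoulli_set_prob p I S * card S) + p i * (\<Sum>S\<in>Pow I. bernoulli_set_prob p I S)"
    by (simp add: sum.distrib sum_distrib_left)
  finally show ?case
    using insert sum_bernoulli_set_prob[of I p] sum_bernoulli_set_prob_card[of I p]
    by (simp add: algebra_simps power2_eq_square)
qed

lemma sum_bernoulli_set_prob_Collect:
  assumes "finite I"
  shows "(\<Sum>S\<in>{S. S \<subseteq> I \<and> Q S}. bernoulli_set_prob p I S)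
    = (\<Sum>S\<in>Pow I. bernoulli_set_prob p I S * of_bool (Q S))"
proof -
  have "{S. S \<subseteq> I \<and> Q S} = {S \<in> Pow I. Q S}" by auto
  then show ?thesis
    using sum.inter_filter[of "Pow I" "bernoulli_set_prob p I" Q] assms
    by (simp add: of_bool_def if_distrib cong: if_cong)
qed

lemma bernoulli_chebyshev:
  assumes "finite I" and p: "\<And>i. i \<in> I \<Longrightarrow> 0 \<le> p i \<and> p i \<le> 1" and "0 < (a::real)"
  shows "(\<Sum>S\<in>Pow I. bernoulli_set_prob p I S * of_bool (a \<le> \<bar>real (card S) - (\<Sum>i\<in>I. p i)\<bar>))
    \<le> card I / a\<^sup>2"
proof -
  let ?W = "bernoulli_set_prob p I" and ?m = "\<Sum>i\<in>I. p i"
  have "(\<Sum>S\<in>Pow I. ?W S * of_bool (a \<le> \<bar>card S - ?m\<bar>)) \<le> (\<Sum>S\<in>Pow I. ?W S * ((card S - ?m)\<^sup>2 / a\<^sup>2))"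
  proof (rule sum_mono)
    fix S assume S: "S \<in> Pow I"
    have "of_bool (a \<le> \<bar>card S - ?m\<bar>) \<le> (card S - ?m)\<^sup>2 / a\<^sup>2"
    proof (cases "a \<le> \<bar>card S - ?m\<bar>")
      case True
      then have "a\<^sup>2 \<le> \<bar>card S - ?m\<bar>\<^sup>2"
        using \<open>0 < a\<close> by (intro power_mono) auto
      then show ?thesis using True \<open>0 < a\<close> by (simp add: power2_abs)
    qed simp
    then show "?W S * of_bool (a \<le> \<bar>card S - ?m\<bar>) \<le> ?W S * ((card S - ?m)\<^sup>2 / a\<^sup>2)"
      using bernoulli_set_prob_nonneg[OF p] S by (intro mult_left_mono) auto
  qed
  also have "\<dots> = ((\<Sum>S\<in>Pow I. ?W S * (real (card S))\<^sup>2) - 2 * ?m * (\<Sum>S\<in>Pow I. ?W S * card S)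
      + ?m\<^sup>2 * (\<Sum>S\<in>Pow I. ?W S)) / a\<^sup>2"
    by (simp add: sum_divide_distrib[symmetric] sum_distrib_left sum_distrib_right sum_subtractf sum.distrib
        power2_diff algebra_simps)
  also have "\<dots> = (\<Sum>i\<in>I. p i * (1 - p i)) / a\<^sup>2"
    using \<open>finite I\<close>
    by (simp add: sum_bernoulli_set_prob sum_bernoulli_set_prob_card sum_bernoulli_set_prob_card_squared,
        simp add: power2_eq_square)
  also have "\<dots> \<le> card I / a\<^sup>2"
    using sum_mono[of I "\<lambda>i. p i * (1 - p i)" "\<lambda>_. 1"] p by (simp add: divide_right_mono mult_le_one)
  finally show ?thesis .
qed

lemma bernoulli_upper_tail_mono:
  assumes "finite I" and "\<And>i. i \<in> I \<Longrightarrow> 0 \<le> p i \<and> p i \<le> q i \<and> q i \<le> 1"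
  shows "(\<Sum>S\<in>Pow I. bernoulli_set_prob p I S * of_bool (t \<le> real (card S)))
    \<le> (\<Sum>S\<in>Pow I. bernoulli_set_prob q I S * of_bool (t \<le> real (card S)))"
  using assms
proof (induction I arbitrary: t rule: finite_induct)
  case empty
  then show ?case by (simp add: bernoulli_set_prob_def)
next
  case (insert i I)
  define tail where "tail r u = (\<Sum>S\<in>Pow I. bernoulli_set_prob r I S * of_bool (u \<le> real (card S)))" for r u
  have split: "(\<Sum>S\<in>Pow (insert i I). bernoulli_set_prob r (insert i I) S * of_bool (t \<le> real (card S)))
      = (1 - r i) * tail r t + r i * tail r (t - 1)" for r
  proof -
    have "(\<Sum>S\<in>Pow (insert i I). bernoulli_set_prob r (insert i I) S * of_bool (t \<le> real (card S)))
        = (\<Sum>S\<in>Pow I. bernoulli_set_prob r I S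
            * ((1 - r i) * of_bool (t \<le> real (card S)) + r i * of_bool (t \<le> real (card (insert i S)))))"
      by (rule sum_bernoulli_set_prob_insert[OF insert.hyps])
    also have "\<dots> = (\<Sum>S\<in>Pow I. (1 - r i) * (bernoulli_set_prob r I S * of_bool (t \<le> real (card S)))
            + r i * (bernoulli_set_prob r I S * of_bool (t - 1 \<le> real (card S))))"
      using insert.hyps by (intro sum.cong) (auto simp: card_insert_Pow algebra_simps)
    finally show ?thesis unfolding tail_def by (simp add: sum.distrib sum_distrib_left)
  qed
  have IH: "tail p u \<le> tail q u" for u
    using insert by (auto simp: tail_def)
  have "tail q t \<le> tail q (t - 1)"
    unfolding tail_def
  proof (intro sum_mono mult_left_mono)
    fix S assume "S \<in> Pow I"
    then show "0 \<le> bernoulli_set_prob q I S"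
      using insert.prems by (intro bernoulli_set_prob_nonneg) (auto intro: order_trans)
  qed simp
  moreover have "0 \<le> p i" "p i \<le> q i" "q i \<le> 1"
    using insert.prems by auto
  ultimately have "(1 - p i) * tail p t + p i * tail p (t - 1) \<le> (1 - q i) * tail q t + q i * tail q (t - 1)"
    using IH[of t] IH[of "t - 1"] mult_left_mono[of "tail p t" "tail q t" "1 - p i"]
      mult_left_mono[of "tail p (t - 1)" "tail q (t - 1)" "p i"]
      mult_left_mono[of "tail q t" "tail q (t - 1)" "q i - p i"]
    by (simp add: algebra_simps)
  then show ?case by (simp add: split)
qed

section \<open>Outcome probabilities and acceptance premiums\<close>

lemma lam_eq_sum_Pow:
  "lam mu Psig N Sig w X = (\<Sum>S\<in>Pow {..<N}. bernoulli_set_prob (vote_prob Psig Sig w) {..<N} S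
     * of_bool ((X = Acc) = (mu * N \<le> card S)))"
  unfolding lam_def bernoulli_set_prob_def[symmetric] by (simp add: sum_bernoulli_set_prob_Collect)

lemma lam_Rej: "lam mu Psig N Sig w Rej = 1 - lam mu Psig N Sig w Acc"
proof -
  have "lam mu Psig N Sig w Rej + lam mu Psig N Sig w Acc
      = (\<Sum>S\<in>Pow {..<N}. bernoulli_set_prob (vote_prob Psig Sig w) {..<N} S)"
    unfolding lam_eq_sum_Pow sum.distrib[symmetric] by (intro sum.cong) auto
  then show ?thesis by (simp add: sum_bernoulli_set_prob)
qed

definition acc_premium :: "(world \<Rightarrow> outcome \<Rightarrow> nat) \<Rightarrow> world \<Rightarrow> real" where
  "acc_premium v w = real (v w Acc) - real (v w Rej)"

lemma exp_util_diff:
  "exp_util P mu Psig N Sig' v - exp_util P mu Psig N Sig v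
     = P WL * (lam mu Psig N Sig' WL Acc - lam mu Psig N Sig WL Acc) * acc_premium v WL
     + P WH * (lam mu Psig N Sig' WH Acc - lam mu Psig N Sig WH Acc) * acc_premium v WH"
  unfolding exp_util_def acc_premium_def by (simp add: lam_Rej algebra_simps)

lemma acc_premium_abs_le:
  "(\<And>X. v w X \<le> (B::nat)) \<Longrightarrow> \<bar>acc_premium v w\<bar> \<le> B"
  unfolding acc_premium_def by (smt (verit) of_nat_0_le_iff of_nat_mono)

lemma acc_premium_friendly:
  "friendly v \<Longrightarrow> 0 < acc_premium v WL \<and> acc_premium v WL < acc_premium v WH"
  unfolding friendly_def acc_premium_def by simp

lemma acc_premium_unfriendly:
  "unfriendly v \<Longrightarrow> acc_premium v WL < acc_premium v WH \<and> acc_premium v WH < 0"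
  unfolding unfriendly_def acc_premium_def by simp

lemma acc_premium_contingent:
  "contingent v \<Longrightarrow> acc_premium v WL \<le> -1 \<and> 1 \<le> acc_premium v WH"
  unfolding contingent_def acc_premium_def by simp

lemma types_disjoint:
  "friendly v \<Longrightarrow> \<not> unfriendly v" "friendly v \<Longrightarrow> \<not> contingent v" "unfriendly v \<Longrightarrow> \<not> contingent v"
  unfolding friendly_def unfriendly_def contingent_def by auto

lemma sincere_valid_profile: "sincere P Psig N v Sig \<Longrightarrow> valid_profile N Sig"
  unfolding sincere_def valid_profile_def by simp

lemma contingent_shift_bound:
  fixes d x y :: real
  assumes "contingent v" and bounded: "\<And>w X. v w X \<le> (B::nat)"
    and "0 \<le> d" and "- d \<le> x" and "y \<le> d"
    and gain: "0 \<le> x * acc_premium v WL + y * acc_premium v WH"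
  shows "\<bar>x\<bar> \<le> B * d \<and> \<bar>y\<bar> \<le> B * d"
proof -
  define \<alpha> \<beta> where "\<alpha> = acc_premium v WL" and "\<beta> = acc_premium v WH"
  have \<alpha>: "- B \<le> \<alpha>" "\<alpha> \<le> -1" and \<beta>: "1 \<le> \<beta>" "\<beta> \<le> B"
    using acc_premium_contingent[OF \<open>contingent v\<close>]
      acc_premium_abs_le[of v WL B] acc_premium_abs_le[of v WH B] bounded
    unfolding \<alpha>_def \<beta>_def by (auto simp: abs_le_iff)
  have "d \<le> B * d" using \<alpha> \<open>0 \<le> d\<close> by (simp add: mult_le_cancel_right1)
  have "y * \<beta> \<le> d * \<beta>" using \<beta> \<open>y \<le> d\<close> by (simp add: mult_right_mono)
  also have "\<dots> \<le> d * B" using \<beta> \<open>0 \<le> d\<close> by (intro mult_left_mono) auto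
  also have "\<dots> = B * d" by simp
  finally have y\<beta>: "y * \<beta> \<le> B * d" .
  have "x * \<alpha> \<le> (- d) * \<alpha>" using \<alpha> \<open>- d \<le> x\<close> by (intro mult_right_mono_neg) auto
  also have "\<dots> = d * (- \<alpha>)" by simp
  also have "\<dots> \<le> d * B" using \<alpha> \<open>0 \<le> d\<close> by (intro mult_left_mono) auto
  also have "\<dots> = B * d" by simp
  finally have x\<alpha>: "x * \<alpha> \<le> B * d" .
  have "x * 1 \<le> x * (- \<alpha>)" if "0 \<le> x" using that \<alpha> by (intro mult_left_mono) auto
  moreover have "(- y) * 1 \<le> (- y) * \<beta>" if "y \<le> 0" using that \<beta> by (intro mult_left_mono) auto
  ultimately show ?thesis
    using gain x\<alpha> y\<beta> \<open>d \<le> B * d\<close> \<open>- d \<le> x\<close> \<open>y \<le> d\<close> unfolding \<alpha>_def \<beta>_def by linarith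
qed

lemma friendly_unfriendly_shift_bound:
  fixes d x y :: real
  assumes "friendly vf" and "unfriendly vu"
    and "- d \<le> x" and "y \<le> d"
    and gain_f: "0 \<le> x * acc_premium vf WL + y * acc_premium vf WH"
    and gain_u: "0 \<le> x * acc_premium vu WL + y * acc_premium vu WH"
  shows "\<bar>x\<bar> \<le> d \<and> \<bar>y\<bar> \<le> d"
proof -
  define a1 b1 a2 b2 where "a1 = acc_premium vf WL" and "b1 = acc_premium vf WH"
    and "a2 = - acc_premium vu WL" and "b2 = - acc_premium vu WH"
  have "0 < a1" "a1 < b1" "0 < b2" "b2 < a2"
    using acc_premium_friendly[OF \<open>friendly vf\<close>] acc_premium_unfriendly[OF \<open>unfriendly vu\<close>]
    unfolding a1_def b1_def a2_def b2_def by auto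
  have gain_u': "x * a2 + y * b2 \<le> 0"
    using gain_u unfolding a1_def b1_def a2_def b2_def by simp
  show ?thesis
  proof (cases "0 < y")
    case True
    then have "0 < y * b2" using \<open>0 < b2\<close> by simp
    then have "x * a2 < 0" using gain_u' by linarith
    then have "x < 0" using \<open>0 < b2\<close> \<open>b2 < a2\<close> by (simp add: mult_less_0_iff)
    then show ?thesis using True assms(3,4) by linarith
  next
    case False
    have "(- y) * a1 \<le> (- y) * b1" using False \<open>a1 < b1\<close> by (intro mult_left_mono) auto
    also have "\<dots> \<le> x * a1" using gain_f unfolding a1_def b1_def a2_def b2_def by simp
    finally have "- y \<le> x" using \<open>0 < a1\<close> by (rule mult_right_le_imp_le)
    have "x * a2 \<le> (- y) * b2" using gain_u' by simp
    also have "\<dots> \<le> (- y) * a2" using False \<open>b2 < a2\<close> by (intro mult_left_mono) auto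
    finally have "x \<le> - y" using \<open>0 < b2\<close> \<open>b2 < a2\<close> by (simp add: mult_right_le_imp_le)
    with \<open>- y \<le> x\<close> have "x = - y" by simp
    then have "0 \<le> y * (b1 - a1)"
      using gain_f unfolding a1_def b1_def a2_def b2_def by (simp add: algebra_simps)
    then have "y = 0" using False \<open>a1 < b1\<close> by (simp add: zero_le_mult_iff)
    then show ?thesis using \<open>x = - y\<close> assms(3,4) by simp
  qed
qed

lemma gain_le_shift_bound:
  fixes b x y :: real
  assumes "\<And>w X. v w X \<le> (B::nat)" and "\<bar>x\<bar> \<le> b" and "\<bar>y\<bar> \<le> b"
  shows "x * acc_premium v WL + y * acc_premium v WH \<le> 2 * B * b"
proof -
  have "x * acc_premium v w \<le> B * b" if "\<bar>x\<bar> \<le> b" for x w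
  proof -
    have "x * acc_premium v w \<le> \<bar>x\<bar> * \<bar>acc_premium v w\<bar>" by (simp add: abs_mult[symmetric])
    also have "\<dots> \<le> b * B"
      using that acc_premium_abs_le[of v w B] assms(1) by (intro mult_mono) auto
    also have "\<dots> = B * b" by simp
    finally show ?thesis .
  qed
  from this[OF assms(2), of WL] this[OF assms(3), of WH] show ?thesis by linarith
qed

lemma mixed_coalition_gain_le:
  fixes \<delta> x y :: real
  assumes "0 \<le> \<delta>" and "- \<delta> \<le> x" and "y \<le> \<delta>"
    and bounded: "\<And>n w X. n \<in> D \<Longrightarrow> v n w X \<le> (B::nat)"
    and gains: "\<And>n. n \<in> D \<Longrightarrow> 0 \<le> x * acc_premium (v n) WL + y * acc_premium (v n) WH"
    and mixed: "(\<exists>c\<in>D. contingent (v c)) \<or> (\<exists>f\<in>D. friendly (v f)) \<and> (\<exists>u\<in>D. unfriendly (v u))"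
    and "n0 \<in> D"
  shows "x * acc_premium (v n0) WL + y * acc_premium (v n0) WH \<le> 2 * real B * (real B + 1) * \<delta>"
proof -
  have "\<delta> \<le> (real B + 1) * \<delta>" "B * \<delta> \<le> (real B + 1) * \<delta>"
    using \<open>0 \<le> \<delta>\<close> by (simp_all add: algebra_simps)
  have "\<bar>x\<bar> \<le> (real B + 1) * \<delta> \<and> \<bar>y\<bar> \<le> (real B + 1) * \<delta>"
    using mixed
  proof (elim disjE conjE bexE)
    fix c assume "c \<in> D" and "contingent (v c)"
    then have "\<bar>x\<bar> \<le> B * \<delta> \<and> \<bar>y\<bar> \<le> B * \<delta>"
      using contingent_shift_bound[of "v c" B \<delta> x y] assms(1-3) bounded gains by blast
    with \<open>B * \<delta> \<le> (real B + 1) * \<delta>\<close> show ?thesis by linarith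
  next
    fix f u assume "f \<in> D" "friendly (v f)" "u \<in> D" "unfriendly (v u)"
    then have "\<bar>x\<bar> \<le> \<delta> \<and> \<bar>y\<bar> \<le> \<delta>"
      using friendly_unfriendly_shift_bound[of "v f" "v u" \<delta> x y] assms(2,3) gains by blast
    with \<open>\<delta> \<le> (real B + 1) * \<delta>\<close> show ?thesis by linarith
  qed
  then show ?thesis
    using gain_le_shift_bound[of "v n0" B x "(real B + 1) * \<delta>" y] bounded \<open>n0 \<in> D\<close>
    by (simp add: mult.assoc)
qed

section \<open>Sincere voting is an approximate strong equilibrium\<close>

locale voting_model =
  fixes P :: "world \<Rightarrow> real" and Psig :: "signal \<Rightarrow> world \<Rightarrow> real" and mu :: real
  assumes prior_pos: "0 < P WL" "0 < P WH"
    and prior_sum: "P WL + P WH = 1"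
    and signal_nonneg: "0 \<le> Psig s w"
    and signal_sum: "Psig Sl w + Psig Sh w = 1"
    and signal_informative: "Psig Sh WL < Psig Sh WH"
begin

lemma vote_prob_bounds:
  assumes "valid_profile N Sig" and "n < N"
  shows "0 \<le> vote_prob Psig Sig w n \<and> vote_prob Psig Sig w n \<le> 1"
proof -
  have "0 \<le> Sig n s \<and> Sig n s \<le> 1" for s
    using assms unfolding valid_profile_def by simp
  then have "Psig s w * Sig n s \<le> Psig s w" "0 \<le> Psig s w * Sig n s" for s
    using signal_nonneg by (simp_all add: mult_left_le)
  then show ?thesis
    using signal_sum[of w] unfolding vote_prob_def by (smt (verit))
qed

lemma lam_Acc_bounds:
  assumes "valid_profile N Sig"
  shows "0 \<le> lam mu Psig N Sig w Acc \<and> lam mu Psig N Sig w Acc \<le> 1"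
proof -
  have "0 \<le> lam mu Psig N Sig w X" for X
    unfolding lam_eq_sum_Pow using vote_prob_bounds[OF assms]
    by (intro sum_nonneg mult_nonneg_nonneg bernoulli_set_prob_nonneg) auto
  then show ?thesis using lam_Rej[of mu Psig N Sig w] by (metis diff_ge_0_iff_ge)
qed

lemma lam_Acc_mono:
  assumes "valid_profile N Sig" and "valid_profile N Sig'" and "\<And>n s. n < N \<Longrightarrow> Sig n s \<le> Sig' n s"
  shows "lam mu Psig N Sig w Acc \<le> lam mu Psig N Sig' w Acc"
proof -
  have "vote_prob Psig Sig w n \<le> vote_prob Psig Sig' w n" if "n < N" for n
    unfolding vote_prob_def using assms(3)[OF that] signal_nonneg by (intro add_mono mult_left_mono) auto
  then have "(\<Sum>S\<in>Pow {..<N}. bernoulli_set_prob (vote_prob Psig Sig w) {..<N} S * of_bool (mu * N \<le> card S))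
      \<le> (\<Sum>S\<in>Pow {..<N}. bernoulli_set_prob (vote_prob Psig Sig' w) {..<N} S * of_bool (mu * N \<le> card S))"
    using vote_prob_bounds[OF assms(1)] vote_prob_bounds[OF assms(2)]
    by (intro bernoulli_upper_tail_mono) auto
  then show ?thesis unfolding lam_eq_sum_Pow by simp
qed

lemma one_minus_fidelity_eq:
  "1 - fidelity P mu Psig N Sig = P WL * lam mu Psig N Sig WL Acc + P WH * (1 - lam mu Psig N Sig WH Acc)"
  unfolding fidelity_def lam_Rej using prior_sum by (simp add: algebra_simps)

lemma fidelity_le_1:
  assumes "valid_profile N Sig"
  shows "fidelity P mu Psig N Sig \<le> 1"
proof -
  have "0 \<le> 1 - fidelity P mu Psig N Sig"
    unfolding one_minus_fidelity_eq using lam_Acc_bounds[OF assms] prior_pos by (simp add: less_imp_le)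
  then show ?thesis by simp
qed

lemma posterior_convex:
  "0 \<le> posterior P Psig s WL \<and> 0 \<le> posterior P Psig s WH
     \<and> posterior P Psig s WL + posterior P Psig s WH = 1"
proof -
  have "0 < Psig s WL \<or> 0 < Psig s WH"
    using signal_informative signal_nonneg signal_sum[of WL] signal_sum[of WH]
    by (cases s) (smt (verit))+
  then have "0 < P WL * Psig s WL + P WH * Psig s WH"
    using prior_pos signal_nonneg by (smt (verit) mult_nonneg_nonneg mult_pos_pos)
  then show ?thesis
    unfolding posterior_def using prior_pos signal_nonneg
    by (simp add: add_divide_distrib[symmetric] less_imp_le)
qed

lemma sincere_friendly:
  assumes "sincere P Psig N v Sig" and "n < N" and "friendly (v n)"
  shows "Sig n s = 1"
proof -
  have "interim_util P Psig (v n) s Rej < interim_util P Psig (v n) s Acc"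
    using posterior_convex[of s] assms(3) unfolding interim_util_def friendly_def
    by (smt (verit) mult_left_mono mult_strict_left_mono of_nat_less_iff)
  then show ?thesis using assms(1,2) unfolding sincere_def by simp
qed

lemma sincere_unfriendly:
  assumes "sincere P Psig N v Sig" and "n < N" and "unfriendly (v n)"
  shows "Sig n s = 0"
proof -
  have "interim_util P Psig (v n) s Acc < interim_util P Psig (v n) s Rej"
    using posterior_convex[of s] assms(3) unfolding interim_util_def unfriendly_def
    by (smt (verit) mult_left_mono mult_strict_left_mono of_nat_less_iff)
  then show ?thesis using assms(1,2) unfolding sincere_def by simp
qed

lemma deviation_shift_bounds:
  assumes "valid_profile N Sig" and "valid_profile N Sig'"
  shows "- (1 - fidelity P mu Psig N Sig) \<le> P WL * (lam mu Psig N Sig' WL Acc - lam mu Psig N Sig WL Acc)"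
    and "P WH * (lam mu Psig N Sig' WH Acc - lam mu Psig N Sig WH Acc) \<le> 1 - fidelity P mu Psig N Sig"
proof -
  have "0 \<le> P w * lam mu Psig N S w Acc" "P w * lam mu Psig N S w Acc \<le> P w"
    if "valid_profile N S" for S w
    using lam_Acc_bounds[OF that, of w] prior_pos
    by (cases w; simp add: mult_left_le)+
  then show "- (1 - fidelity P mu Psig N Sig) \<le> P WL * (lam mu Psig N Sig' WL Acc - lam mu Psig N Sig WL Acc)"
    and "P WH * (lam mu Psig N Sig' WH Acc - lam mu Psig N Sig WH Acc) \<le> 1 - fidelity P mu Psig N Sig"
    using assms unfolding one_minus_fidelity_eq by (simp_all add: algebra_simps add_increasing2)
qed

lemma friendly_deviation_lowers_acceptance:
  assumes "sincere P Psig N v Sig" and "valid_profile N Sig'"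
    and "\<And>n. n < N \<Longrightarrow> n \<notin> D \<Longrightarrow> Sig' n = Sig n" and "\<And>n. n \<in> D \<Longrightarrow> friendly (v n)"
  shows "lam mu Psig N Sig' w Acc \<le> lam mu Psig N Sig w Acc"
proof (rule lam_Acc_mono[OF assms(2) sincere_valid_profile[OF assms(1)]])
  fix n s assume "n < N"
  then show "Sig' n s \<le> Sig n s"
    using assms sincere_friendly[OF assms(1)] unfolding valid_profile_def by (cases "n \<in> D") auto
qed

lemma unfriendly_deviation_raises_acceptance:
  assumes "sincere P Psig N v Sig" and "valid_profile N Sig'"
    and "\<And>n. n < N \<Longrightarrow> n \<notin> D \<Longrightarrow> Sig' n = Sig n" and "\<And>n. n \<in> D \<Longrightarrow> unfriendly (v n)"
  shows "lam mu Psig N Sig w Acc \<le> lam mu Psig N Sig' w Acc"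
proof (rule lam_Acc_mono[OF sincere_valid_profile[OF assms(1)] assms(2)])
  fix n s assume "n < N"
  then show "Sig n s \<le> Sig' n s"
    using assms sincere_unfriendly[OF assms(1)] unfolding valid_profile_def by (cases "n \<in> D") auto
qed

lemma friendly_coalition_gain_nonpos:
  assumes "sincere P Psig N v Sig" and "valid_profile N Sig'"
    and "\<And>n. n < N \<Longrightarrow> n \<notin> D \<Longrightarrow> Sig' n = Sig n" and "\<And>n. n \<in> D \<Longrightarrow> friendly (v n)"
    and "n0 \<in> D"
  shows "exp_util P mu Psig N Sig' (v n0) \<le> exp_util P mu Psig N Sig (v n0)"
proof -
  have "P w * (lam mu Psig N Sig' w Acc - lam mu Psig N Sig w Acc) * acc_premium (v n0) w \<le> 0" for w
  proof (rule mult_nonpos_nonneg)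
    show "P w * (lam mu Psig N Sig' w Acc - lam mu Psig N Sig w Acc) \<le> 0"
      using friendly_deviation_lowers_acceptance[OF assms(1-4)] prior_pos
      by (cases w) (simp_all add: mult_nonneg_nonpos)
    show "0 \<le> acc_premium (v n0) w"
      using acc_premium_friendly[OF assms(4)[OF \<open>n0 \<in> D\<close>]] by (cases w) auto
  qed
  from add_nonpos_nonpos[OF this[of WL] this[of WH]]
  show ?thesis unfolding exp_util_diff[symmetric] by simp
qed

lemma unfriendly_coalition_gain_nonpos:
  assumes "sincere P Psig N v Sig" and "valid_profile N Sig'"
    and "\<And>n. n < N \<Longrightarrow> n \<notin> D \<Longrightarrow> Sig' n = Sig n" and "\<And>n. n \<in> D \<Longrightarrow> unfriendly (v n)"
    and "n0 \<in> D"
  shows "exp_util P mu Psig N Sig' (v n0) \<le> exp_util P mu Psig N Sig (v n0)"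
proof -
  have "P w * (lam mu Psig N Sig' w Acc - lam mu Psig N Sig w Acc) * acc_premium (v n0) w \<le> 0" for w
  proof (rule mult_nonneg_nonpos)
    show "0 \<le> P w * (lam mu Psig N Sig' w Acc - lam mu Psig N Sig w Acc)"
      using unfriendly_deviation_raises_acceptance[OF assms(1-4)] prior_pos
      by (cases w) simp_all
    show "acc_premium (v n0) w \<le> 0"
      using acc_premium_unfriendly[OF assms(4)[OF \<open>n0 \<in> D\<close>]] by (cases w) auto
  qed
  from add_nonpos_nonpos[OF this[of WL] this[of WH]]
  show ?thesis unfolding exp_util_diff[symmetric] by simp
qed

lemma mixed_coalition_deviation_gain_le:
  assumes valid: "valid_profile N Sig" and valid': "valid_profile N Sig'"
    and bounded: "\<And>n w X. n \<in> D \<Longrightarrow> v n w X \<le> (B::nat)"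
    and weak: "\<And>n. n \<in> D \<Longrightarrow> exp_util P mu Psig N Sig (v n) \<le> exp_util P mu Psig N Sig' (v n)"
    and mixed: "(\<exists>c\<in>D. contingent (v c)) \<or> (\<exists>f\<in>D. friendly (v f)) \<and> (\<exists>u\<in>D. unfriendly (v u))"
    and "n0 \<in> D"
  shows "exp_util P mu Psig N Sig' (v n0) - exp_util P mu Psig N Sig (v n0)
    \<le> 2 * real B * (real B + 1) * (1 - fidelity P mu Psig N Sig)"
proof -
  let ?u = "exp_util P mu Psig N" and ?\<delta> = "1 - fidelity P mu Psig N Sig"
  define x y where "x = P WL * (lam mu Psig N Sig' WL Acc - lam mu Psig N Sig WL Acc)"
    and "y = P WH * (lam mu Psig N Sig' WH Acc - lam mu Psig N Sig WH Acc)"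
  have gain: "?u Sig' (v n) - ?u Sig (v n) = x * acc_premium (v n) WL + y * acc_premium (v n) WH" for n
    unfolding x_def y_def exp_util_diff ..
  have "0 \<le> ?\<delta>" using fidelity_le_1[OF valid] by simp
  moreover have shift: "- ?\<delta> \<le> x" "y \<le> ?\<delta>"
    using deviation_shift_bounds[OF valid valid'] unfolding x_def y_def by auto
  moreover have "0 \<le> x * acc_premium (v n) WL + y * acc_premium (v n) WH" if "n \<in> D" for n
    using weak[OF that] gain[of n] by linarith
  ultimately show ?thesis
    unfolding gain using mixed_coalition_gain_le[OF _ _ _ bounded _ mixed \<open>n0 \<in> D\<close>] by blast
qed

theorem sincere_strong_BNE:
  assumes sincere: "sincere P Psig N v Sig"
    and bounded: "\<And>n w X. n < N \<Longrightarrow> v n w X \<le> (B::nat)"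
    and types: "\<And>n. n < N \<Longrightarrow> friendly (v n) \<or> unfriendly (v n) \<or> contingent (v n)"
  shows "strong_BNE P mu Psig N v Sig (2 * real B * (real B + 1) * (1 - fidelity P mu Psig N Sig))"
  unfolding strong_BNE_def
proof (intro notI)
  let ?u = "exp_util P mu Psig N" and ?\<delta> = "1 - fidelity P mu Psig N Sig"
  assume "\<exists>D Sig'. D \<subseteq> {..<N} \<and> valid_profile N Sig' \<and> (\<forall>n<N. n \<notin> D \<longrightarrow> Sig' n = Sig n)
    \<and> (\<forall>n\<in>D. ?u Sig (v n) \<le> ?u Sig' (v n)) \<and> (\<exists>n\<in>D. ?u Sig (v n) + 2 * real B * (real B + 1) * ?\<delta> < ?u Sig' (v n))"
  then obtain D Sig' n0 where D: "D \<subseteq> {..<N}" and valid': "valid_profile N Sig'"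
    and unchanged: "\<And>n. n < N \<Longrightarrow> n \<notin> D \<Longrightarrow> Sig' n = Sig n"
    and weak: "\<And>n. n \<in> D \<Longrightarrow> ?u Sig (v n) \<le> ?u Sig' (v n)"
    and "n0 \<in> D" and strict: "?u Sig (v n0) + 2 * real B * (real B + 1) * ?\<delta> < ?u Sig' (v n0)"
    by blast
  have valid: "valid_profile N Sig" using sincere by (rule sincere_valid_profile)
  then have "0 \<le> ?\<delta>" using fidelity_le_1 by simp
  then have "0 \<le> 2 * real B * (real B + 1) * ?\<delta>" by simp
  consider (mixed) "(\<exists>c\<in>D. contingent (v c)) \<or> (\<exists>f\<in>D. friendly (v f)) \<and> (\<exists>u\<in>D. unfriendly (v u))"
    | (friendly) "\<And>n. n \<in> D \<Longrightarrow> friendly (v n)" | (unfriendly) "\<And>n. n \<in> D \<Longrightarrow> unfriendly (v n)"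
    using types D by blast
  then show False
  proof cases
    case mixed
    have "v n w X \<le> B" if "n \<in> D" for n w X
      using that D bounded by auto
    from mixed_coalition_deviation_gain_le[OF valid valid' this weak mixed \<open>n0 \<in> D\<close>]
    show False using strict by linarith
  next
    case friendly
    show False
      using friendly_coalition_gain_nonpos[OF sincere valid' unchanged friendly \<open>n0 \<in> D\<close>] strict
        \<open>0 \<le> 2 * real B * (real B + 1) * ?\<delta>\<close>
      by linarith
  next
    case unfriendly
    show False
      using unfriendly_coalition_gain_nonpos[OF sincere valid' unchanged unfriendly \<open>n0 \<in> D\<close>] strict
        \<open>0 \<le> 2 * real B * (real B + 1) * ?\<delta>\<close>
      by linarith
  qed
qed

end

section \<open>Deviations of the contingent agents\<close>

context voting_model
begin

lemma contingent_gain_lower_bound: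
  assumes "valid_profile N Sig" and "valid_profile N Sig'"
    and "contingent v" and bounded: "\<And>w X. v w X \<le> (B::nat)"
  shows "(1 - fidelity P mu Psig N Sig) - B * (1 - fidelity P mu Psig N Sig')
    \<le> exp_util P mu Psig N Sig' v - exp_util P mu Psig N Sig v"
proof -
  define \<alpha> \<beta> where "\<alpha> = - acc_premium v WL" and "\<beta> = acc_premium v WH"
  have "1 \<le> \<alpha>" "\<alpha> \<le> B" "1 \<le> \<beta>" "\<beta> \<le> B"
    using acc_premium_contingent[OF \<open>contingent v\<close>]
      acc_premium_abs_le[of v WL B] acc_premium_abs_le[of v WH B] bounded
    unfolding \<alpha>_def \<beta>_def by (auto simp: abs_le_iff)
  define u u' w w' where "u = P WL * lam mu Psig N Sig WL Acc" and "u' = P WL * lam mu Psig N Sig' WL Acc"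
    and "w = P WH * (1 - lam mu Psig N Sig WH Acc)" and "w' = P WH * (1 - lam mu Psig N Sig' WH Acc)"
  have "0 \<le> u" "0 \<le> u'" "0 \<le> w" "0 \<le> w'"
    using lam_Acc_bounds[OF assms(1)] lam_Acc_bounds[OF assms(2)] prior_pos
    unfolding u_def u'_def w_def w'_def by (simp_all add: less_imp_le)
  have "u * 1 \<le> u * \<alpha>" "u' * \<alpha> \<le> u' * B" "w * 1 \<le> w * \<beta>" "w' * \<beta> \<le> w' * B"
    by (intro mult_left_mono; fact)+
  then have "u + w - B * (u' + w') \<le> (u - u') * \<alpha> + (w - w') * \<beta>"
    by (simp add: algebra_simps)
  also have "\<dots> = exp_util P mu Psig N Sig' v - exp_util P mu Psig N Sig v"
    unfolding exp_util_diff \<alpha>_def \<beta>_def u_def u'_def w_def w'_def by (simp add: algebra_simps)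
  finally show ?thesis
    unfolding one_minus_fidelity_eq u_def u'_def w_def w'_def by (simp add: algebra_simps)
qed

lemma strong_BNE_error_le:
  assumes "strong_BNE P mu Psig N v Sig \<epsilon>" and "valid_profile N Sig" and "valid_profile N Sig'"
    and "C \<subseteq> {..<N}" and "C \<noteq> {}" and "\<And>n. n \<in> C \<Longrightarrow> contingent (v n)"
    and "\<And>n. n < N \<Longrightarrow> n \<notin> C \<Longrightarrow> Sig' n = Sig n"
    and "\<And>n w X. n < N \<Longrightarrow> v n w X \<le> (B::nat)"
  shows "1 - fidelity P mu Psig N Sig \<le> B * (1 - fidelity P mu Psig N Sig') + \<bar>\<epsilon>\<bar>"
proof (rule ccontr)
  assume large_error: "\<not> ?thesis"
  have gain: "\<bar>\<epsilon>\<bar> < exp_util P mu Psig N Sig' (v n) - exp_util P mu Psig N Sig (v n)" if "n \<in> C" for n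
  proof -
    have "n < N" using that assms(4) by blast
    then show ?thesis
      using contingent_gain_lower_bound[OF assms(2,3) assms(6)[OF that] assms(8)] large_error
      by linarith
  qed
  obtain c where "c \<in> C" using \<open>C \<noteq> {}\<close> by blast
  have "\<forall>n\<in>C. exp_util P mu Psig N Sig (v n) \<le> exp_util P mu Psig N Sig' (v n)"
    using gain abs_ge_zero[of \<epsilon>] by (fastforce intro: less_imp_le)
  moreover have "exp_util P mu Psig N Sig (v c) + \<epsilon> < exp_util P mu Psig N Sig' (v c)"
    using gain[OF \<open>c \<in> C\<close>] abs_ge_self[of \<epsilon>] by linarith
  ultimately show False
    using assms(1,3,4,7) \<open>c \<in> C\<close> unfolding strong_BNE_def by blast
qed

lemma lam_le_chebyshev:
  assumes "valid_profile N Sig" and "0 < a"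
    and "\<And>c. (X = Acc) = (mu * N \<le> c) \<Longrightarrow> a \<le> \<bar>c - (\<Sum>n<N. vote_prob Psig Sig w n)\<bar>"
  shows "lam mu Psig N Sig w X \<le> N / a\<^sup>2"
proof -
  let ?p = "vote_prob Psig Sig w"
  have p: "\<And>n. n \<in> {..<N} \<Longrightarrow> 0 \<le> ?p n \<and> ?p n \<le> 1"
    using vote_prob_bounds[OF assms(1)] by simp
  have "lam mu Psig N Sig w X
      \<le> (\<Sum>S\<in>Pow {..<N}. bernoulli_set_prob ?p {..<N} S * of_bool (a \<le> \<bar>real (card S) - (\<Sum>n<N. ?p n)\<bar>))"
    unfolding lam_eq_sum_Pow using assms(3) bernoulli_set_prob_nonneg[of "{..<N}" ?p] p
    by (intro sum_mono mult_left_mono) auto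
  also have "\<dots> \<le> N / a\<^sup>2"
    using bernoulli_chebyshev[of "{..<N}" ?p a] p \<open>0 < a\<close> by simp
  finally show ?thesis .
qed

lemma error_le_chebyshev:
  assumes "valid_profile N Sig" and "0 < a"
    and "(\<Sum>n<N. vote_prob Psig Sig WL n) + a \<le> mu * N"
    and "mu * N + a \<le> (\<Sum>n<N. vote_prob Psig Sig WH n)"
  shows "1 - fidelity P mu Psig N Sig \<le> N / a\<^sup>2"
proof -
  have "lam mu Psig N Sig WL Acc \<le> N / a\<^sup>2" "lam mu Psig N Sig WH Rej \<le> N / a\<^sup>2"
    using assms by (auto intro!: lam_le_chebyshev)
  then have "P WL * lam mu Psig N Sig WL Acc + P WH * lam mu Psig N Sig WH Rej
      \<le> P WL * (N / a\<^sup>2) + P WH * (N / a\<^sup>2)"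
    using prior_pos by (intro add_mono mult_left_mono) auto
  also have "\<dots> = N / a\<^sup>2"
    using prior_sum by (metis distrib_right mult_1)
  finally show ?thesis
    unfolding one_minus_fidelity_eq lam_Rej .
qed

end

lemma exists_separating_mix:
  fixes r hL hH :: real
  assumes "0 < r" "r < 1" "0 \<le> hL" "hL < hH" "hH \<le> 1"
  obtains qh ql where "0 \<le> ql" "ql \<le> 1" "0 \<le> qh" "qh \<le> 1"
    "hL * qh + (1 - hL) * ql < r" "r < hH * qh + (1 - hH) * ql"
proof
  define d m where "d = min r (1 - r)" and "m = (hL + hH) / 2"
  have "0 < d" "d \<le> r" "d \<le> 1 - r" "0 \<le> m" "m \<le> 1"
    using assms unfolding d_def m_def by auto
  have mix: "h * (r + d * (1 - m)) + (1 - h) * (r - d * m) = r + d * (h - m)" for h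
    by (simp add: algebra_simps)
  have "0 \<le> d * m" "d * m \<le> d" "0 \<le> d * (1 - m)" "d * (1 - m) \<le> d"
    using \<open>0 < d\<close> \<open>0 \<le> m\<close> \<open>m \<le> 1\<close> by (simp_all add: mult_left_le)
  then show "0 \<le> r - d * m" "r - d * m \<le> 1" "0 \<le> r + d * (1 - m)" "r + d * (1 - m) \<le> 1"
    using \<open>d \<le> r\<close> \<open>d \<le> 1 - r\<close> \<open>0 < r\<close> \<open>r < 1\<close> by linarith+
  show "hL * (r + d * (1 - m)) + (1 - hL) * (r - d * m) < r"
    "r < hH * (r + d * (1 - m)) + (1 - hH) * (r - d * m)"
    unfolding mix using \<open>0 < d\<close> assms unfolding m_def by (simp_all add: mult_pos_neg)
qed

section \<open>Sequences of instances\<close>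

locale voting_sequence = voting_model +
  fixes aF aU aC :: real and B :: nat
    and v :: "nat \<Rightarrow> nat \<Rightarrow> world \<Rightarrow> outcome \<Rightarrow> nat" and Sig :: "nat \<Rightarrow> nat \<Rightarrow> signal \<Rightarrow> real"
  assumes shares_nonneg: "0 \<le> aF" "0 \<le> aU" and shares_sum: "aF + aU + aC = 1"
    and friendly_minority: "aF < mu" and unfriendly_minority: "aU < 1 - mu"
    and utility_bounded: "n < N \<Longrightarrow> v N n w X \<le> B"
    and agent_types: "n < N \<Longrightarrow> friendly (v N n) \<or> unfriendly (v N n) \<or> contingent (v N n)"
    and card_friendly: "card {n. n < N \<and> friendly (v N n)} = nat \<lfloor>aF * N\<rfloor>"
    and card_unfriendly: "card {n. n < N \<and> unfriendly (v N n)} = nat \<lfloor>aU * N\<rfloor>"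
    and sincere: "sincere P Psig N (v N) (Sig N)"
begin

abbreviation error_prob :: "nat \<Rightarrow> real" where
  "error_prob N \<equiv> 1 - fidelity P mu Psig N (Sig N)"

theorem strong_BNE_if_fidelity_tendsto_1:
  assumes "(\<lambda>N. fidelity P mu Psig N (Sig N)) \<longlonglongrightarrow> 1"
  shows "\<exists>\<epsilon>. \<epsilon> \<longlonglongrightarrow> 0 \<and> (\<forall>N. strong_BNE P mu Psig N (v N) (Sig N) (\<epsilon> N))"
proof (intro exI conjI allI)
  have "error_prob \<longlonglongrightarrow> 0"
    using tendsto_diff[OF tendsto_const assms, of 1] by simp
  then show "(\<lambda>N. 2 * real B * (real B + 1) * error_prob N) \<longlonglongrightarrow> 0"
    by (auto intro: tendsto_mult_right_zero)
  show "strong_BNE P mu Psig N (v N) (Sig N) (2 * real B * (real B + 1) * error_prob N)" for N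
    using sincere_strong_BNE[OF sincere utility_bounded agent_types] .
qed

abbreviation contingents :: "nat \<Rightarrow> nat set" where
  "contingents N \<equiv> {n. n < N \<and> contingent (v N n)}"

abbreviation friendlies :: "nat \<Rightarrow> nat set" where
  "friendlies N \<equiv> {n. n < N \<and> friendly (v N n)}"

lemma card_friendly_bounds: "aF * N - 1 < card (friendlies N) \<and> card (friendlies N) \<le> aF * N"
  using card_friendly[of N] shares_nonneg of_nat_floor[of "aF * N"] real_of_int_floor_gt_diff_one[of "aF * N"]
  by auto

lemma card_contingent_bounds: "aC * N \<le> card (contingents N) \<and> card (contingents N) \<le> aC * N + 2"
proof -
  let ?U = "{n. n < N \<and> unfriendly (v N n)}"
  have "{..<N} = friendlies N \<union> ?U \<union> contingents N"
    using agent_types by auto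
  then have "N = card (friendlies N \<union> ?U \<union> contingents N)"
    by (metis card_lessThan)
  also have "\<dots> = card (friendlies N) + card ?U + card (contingents N)"
    using types_disjoint by (subst card_Un_disjoint; auto)+
  finally have "real N = card (friendlies N) + card ?U + card (contingents N)"
    by simp
  moreover have "aU * N - 1 < card ?U \<and> card ?U \<le> aU * N"
    using card_unfriendly[of N] shares_nonneg of_nat_floor[of "aU * N"] real_of_int_floor_gt_diff_one[of "aU * N"]
    by auto
  moreover have "aF * N + aU * N + aC * N = N"
    using shares_sum by (metis distrib_right mult_1)
  ultimately show ?thesis
    using card_friendly_bounds[of N] by linarith
qed

lemma signal_Sl: "Psig Sl w = 1 - Psig Sh w"
  using signal_sum[of w] by simp

lemma contingent_share_pos: "0 < aC"
  using shares_sum friendly_minority unfriendly_minority by linarith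

lemma exists_contingent_mix:
  obtains qh ql \<kappa> where "0 \<le> qh" "qh \<le> 1" "0 \<le> ql" "ql \<le> 1" "0 < \<kappa>"
    "mu + \<kappa> \<le> aF + aC * (Psig Sh WH * qh + Psig Sl WH * ql)"
    "aF + aC * (Psig Sh WL * qh + Psig Sl WL * ql) \<le> mu - \<kappa>"
proof -
  define r where "r = (mu - aF) / aC"
  have "0 < aC" "aC * r = mu - aF"
    using contingent_share_pos unfolding r_def by auto
  moreover have "0 < r" "r < 1"
    using \<open>0 < aC\<close> shares_sum friendly_minority unfriendly_minority
    unfolding r_def by (simp_all add: divide_less_eq)
  moreover have "0 \<le> Psig Sh WL" "Psig Sh WH \<le> 1"
    using signal_nonneg[of Sh WL] signal_nonneg[of Sl WH] signal_sum[of WH] by auto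
  ultimately obtain qh ql where q: "0 \<le> qh" "qh \<le> 1" "0 \<le> ql" "ql \<le> 1"
    and "Psig Sh WL * qh + Psig Sl WL * ql < r" "r < Psig Sh WH * qh + Psig Sl WH * ql"
    using exists_separating_mix[of r "Psig Sh WL" "Psig Sh WH"] signal_informative
    unfolding signal_Sl by blast
  then have "aC * (Psig Sh WL * qh + Psig Sl WL * ql) < mu - aF"
    "mu - aF < aC * (Psig Sh WH * qh + Psig Sl WH * ql)"
    using \<open>0 < aC\<close> \<open>aC * r = mu - aF\<close> by (metis mult_strict_left_mono)+
  then show ?thesis
    by (intro that[OF q, of "min (aF + aC * (Psig Sh WH * qh + Psig Sl WH * ql) - mu)
        (mu - aF - aC * (Psig Sh WL * qh + Psig Sl WL * ql))"]) auto
qed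

definition deviate :: "real \<Rightarrow> real \<Rightarrow> nat \<Rightarrow> nat \<Rightarrow> signal \<Rightarrow> real" where
  "deviate qh ql N n s = (if contingent (v N n) then (if s = Sh then qh else ql) else Sig N n s)"

lemma valid_deviate:
  "0 \<le> qh \<Longrightarrow> qh \<le> 1 \<Longrightarrow> 0 \<le> ql \<Longrightarrow> ql \<le> 1 \<Longrightarrow> valid_profile N (deviate qh ql N)"
  using sincere_valid_profile[OF sincere] unfolding valid_profile_def deviate_def by auto

lemma sum_vote_prob_deviate:
  "(\<Sum>n<N. vote_prob Psig (deviate qh ql N) w n)
     = card (friendlies N) + (Psig Sh w * qh + Psig Sl w * ql) * card (contingents N)"
proof -
  have "vote_prob Psig (deviate qh ql N) w n
      = of_bool (friendly (v N n)) + of_bool (contingent (v N n)) * (Psig Sh w * qh + Psig Sl w * ql)"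
    if "n < N" for n
    using agent_types[OF that] types_disjoint sincere_friendly[OF sincere that]
      sincere_unfriendly[OF sincere that] signal_sum[of w]
    unfolding vote_prob_def deviate_def by (auto simp: algebra_simps)
  then have "(\<Sum>n<N. vote_prob Psig (deviate qh ql N) w n)
      = (\<Sum>n<N. of_bool (friendly (v N n)) + of_bool (contingent (v N n)) * (Psig Sh w * qh + Psig Sl w * ql))"
    by simp
  also have "\<dots> = card (friendlies N) + (Psig Sh w * qh + Psig Sl w * ql) * card (contingents N)"
    by (simp add: sum.distrib sum_distrib_right[symmetric] of_bool_def sum.If_cases Int_def mult.commute)
  finally show ?thesis .
qed

lemma deviate_error_le:
  assumes q: "0 \<le> qh" "qh \<le> 1" "0 \<le> ql" "ql \<le> 1" and "0 < \<kappa>"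
    and mix_H: "mu + \<kappa> \<le> aF + aC * (Psig Sh WH * qh + Psig Sl WH * ql)"
    and mix_L: "aF + aC * (Psig Sh WL * qh + Psig Sl WL * ql) \<le> mu - \<kappa>"
    and "4 \<le> N * \<kappa>"
  shows "1 - fidelity P mu Psig N (deviate qh ql N) \<le> 4 / (N * \<kappa>\<^sup>2)"
proof -
  define \<pi> where "\<pi> w = Psig Sh w * qh + Psig Sl w * ql" for w
  have \<pi>: "0 \<le> \<pi> w" "\<pi> w \<le> 1" for w
    using q signal_nonneg[of _ w] signal_sum[of w] mult_left_le[of qh "Psig Sh w"] mult_left_le[of ql "Psig Sl w"]
    unfolding \<pi>_def by (simp_all add: add_mono)
  define a where "a = N * \<kappa> / 2"
  have "0 < a" using \<open>4 \<le> N * \<kappa>\<close> unfolding a_def by simp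
  have "mu * N + a \<le> (\<Sum>n<N. vote_prob Psig (deviate qh ql N) WH n)"
  proof -
    have "N * (mu + \<kappa>) \<le> N * (aF + aC * \<pi> WH)"
      using mix_H unfolding \<pi>_def by (intro mult_left_mono) auto
    moreover have "\<pi> WH * (aC * N) \<le> \<pi> WH * card (contingents N)"
      using card_contingent_bounds[of N] \<pi> by (intro mult_left_mono) auto
    ultimately show ?thesis
      using card_friendly_bounds[of N] \<open>4 \<le> N * \<kappa>\<close>
      unfolding sum_vote_prob_deviate \<pi>_def[symmetric] a_def by (simp add: algebra_simps)
  qed
  moreover have "(\<Sum>n<N. vote_prob Psig (deviate qh ql N) WL n) + a \<le> mu * N"
  proof -
    have "N * (aF + aC * \<pi> WL) \<le> N * (mu - \<kappa>)"
      using mix_L unfolding \<pi>_def by (intro mult_left_mono) auto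
    moreover have "\<pi> WL * card (contingents N) \<le> \<pi> WL * (aC * N + 2)"
      using card_contingent_bounds[of N] \<pi> by (intro mult_left_mono) auto
    ultimately show ?thesis
      using card_friendly_bounds[of N] \<open>4 \<le> N * \<kappa>\<close> \<pi>[of WL]
      unfolding sum_vote_prob_deviate \<pi>_def[symmetric] a_def by (simp add: algebra_simps)
  qed
  ultimately have "1 - fidelity P mu Psig N (deviate qh ql N) \<le> N / a\<^sup>2"
    by (intro error_le_chebyshev[OF valid_deviate[OF q] \<open>0 < a\<close>])
  also have "\<dots> = 4 / (N * \<kappa>\<^sup>2)"
    using \<open>0 < a\<close> unfolding a_def by (simp add: field_simps power2_eq_square)
  finally show ?thesis .
qed

lemma strong_BNE_error_bound:
  assumes BNE: "strong_BNE P mu Psig N (v N) (Sig N) \<epsilon>"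
    and q: "0 \<le> qh" "qh \<le> 1" "0 \<le> ql" "ql \<le> 1" and "0 < \<kappa>"
    and mix: "mu + \<kappa> \<le> aF + aC * (Psig Sh WH * qh + Psig Sl WH * ql)"
      "aF + aC * (Psig Sh WL * qh + Psig Sl WL * ql) \<le> mu - \<kappa>"
    and "4 \<le> N * \<kappa>"
  shows "error_prob N \<le> 4 * B / \<kappa>\<^sup>2 / N + \<bar>\<epsilon>\<bar>"
proof -
  have "0 < N" using \<open>4 \<le> N * \<kappa>\<close> by (cases N) auto
  then have "0 < aC * N" using contingent_share_pos by simp
  then have "contingents N \<noteq> {}" using card_contingent_bounds[of N] by force
  then have "error_prob N \<le> B * (1 - fidelity P mu Psig N (deviate qh ql N)) + \<bar>\<epsilon>\<bar>"
    using sincere_valid_profile[OF sincere] valid_deviate[OF q] utility_bounded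
    by (intro strong_BNE_error_le[where C = "contingents N", OF BNE]) (auto simp: deviate_def)
  also have "\<dots> \<le> B * (4 / (N * \<kappa>\<^sup>2)) + \<bar>\<epsilon>\<bar>"
    by (intro add_right_mono mult_left_mono deviate_error_le[OF q \<open>0 < \<kappa>\<close> mix \<open>4 \<le> N * \<kappa>\<close>]) simp
  also have "\<dots> = 4 * B / \<kappa>\<^sup>2 / N + \<bar>\<epsilon>\<bar>"
    by (simp add: divide_divide_eq_left mult.commute)
  finally show ?thesis .
qed

theorem fidelity_tendsto_1_if_strong_BNE:
  assumes "\<epsilon> \<longlonglongrightarrow> 0" and BNE: "\<And>N. strong_BNE P mu Psig N (v N) (Sig N) (\<epsilon> N)"
  shows "(\<lambda>N. fidelity P mu Psig N (Sig N)) \<longlonglongrightarrow> 1"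
proof -
  obtain qh ql \<kappa> where q: "0 \<le> qh" "qh \<le> 1" "0 \<le> ql" "ql \<le> 1" and "0 < \<kappa>"
    and mix: "mu + \<kappa> \<le> aF + aC * (Psig Sh WH * qh + Psig Sl WH * ql)"
      "aF + aC * (Psig Sh WL * qh + Psig Sl WL * ql) \<le> mu - \<kappa>"
    by (rule exists_contingent_mix)
  have "eventually (\<lambda>N. 4 \<le> N * \<kappa>) sequentially"
    using filterlim_real_sequentially \<open>0 < \<kappa>\<close>
    by (simp add: filterlim_at_top pos_divide_le_eq[symmetric])
  then have upper: "eventually (\<lambda>N. error_prob N \<le> 4 * B / \<kappa>\<^sup>2 / N + \<bar>\<epsilon> N\<bar>) sequentially"
    by (rule eventually_mono) (rule strong_BNE_error_bound[OF BNE q \<open>0 < \<kappa>\<close> mix])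
  have lower: "eventually (\<lambda>N. 0 \<le> error_prob N) sequentially"
    using fidelity_le_1[OF sincere_valid_profile[OF sincere]] by simp
  have "(\<lambda>N. 4 * B / \<kappa>\<^sup>2 / N + \<bar>\<epsilon> N\<bar>) \<longlonglongrightarrow> 0"
    using tendsto_add[OF lim_const_over_n[of "4 * B / \<kappa>\<^sup>2"] tendsto_rabs_zero[OF \<open>\<epsilon> \<longlonglongrightarrow> 0\<close>]] by simp
  with lower upper have "error_prob \<longlonglongrightarrow> 0"
    by (rule tendsto_sandwich[OF _ _ tendsto_const])
  then have "(\<lambda>N. 1 - error_prob N) \<longlonglongrightarrow> 1 - 0"
    by (intro tendsto_diff tendsto_const)
  then show ?thesis by simp
qed

end

theorem corollary4:
  fixes mu :: real and P :: "world \<Rightarrow> real" and Psig :: "signal \<Rightarrow> world \<Rightarrow> real"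
    and aF aU aC :: real and B :: nat
    and v :: "nat \<Rightarrow> nat \<Rightarrow> world \<Rightarrow> outcome \<Rightarrow> nat"
    and Sig :: "nat \<Rightarrow> nat \<Rightarrow> signal \<Rightarrow> real"
  assumes "0 < mu" and "mu < 1"
    and "P WL > 0" and "P WH > 0" and "P WL + P WH = 1"
    and "\<forall>w. Psig Sl w \<ge> 0 \<and> Psig Sh w \<ge> 0 \<and> Psig Sl w + Psig Sh w = 1"
    and "Psig Sh WH > Psig Sh WL" and "Psig Sl WH < Psig Sl WL"
    and "aF \<ge> 0" and "aU \<ge> 0" and "aC \<ge> 0" and "aF + aU + aC = 1"
    and "aF < mu" and "aU < 1 - mu"
    and "\<forall>N n w X. n < N \<longrightarrow> v N n w X \<le> B"
    and "\<forall>N n. n < N \<longrightarrow> v N n WH Acc > v N n WL Acc \<and> v N n WH Rej < v N n WL Rej"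
    and "\<forall>N n. n < N \<longrightarrow> friendly (v N n) \<or> unfriendly (v N n) \<or> contingent (v N n)"
    and "\<forall>N. card {n. n < N \<and> friendly (v N n)} = nat \<lfloor>aF * real N\<rfloor>"
    and "\<forall>N. card {n. n < N \<and> unfriendly (v N n)} = nat \<lfloor>aU * real N\<rfloor>"
    and "\<forall>N. sincere P Psig N (v N) (Sig N)"
  shows "(\<lambda>N. fidelity P mu Psig N (Sig N)) \<longlonglongrightarrow> 1 \<longleftrightarrow>
         (\<exists>\<epsilon>::nat \<Rightarrow> real. \<epsilon> \<longlonglongrightarrow> 0 \<and>
            (\<forall>N. strong_BNE P mu Psig N (v N) (Sig N) (\<epsilon> N)))"
proof -
  interpret voting_sequence P Psig mu aF aU aC B v Sig
  proof unfold_locales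
    show "0 \<le> Psig s w" for s w
      using assms(6) by (cases s) auto
  qed (use assms in auto)
  show ?thesis
    using strong_BNE_if_fidelity_tendsto_1 fidelity_tendsto_1_if_strong_BNE by blast
qed

end
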